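(* Let $G$ be a connected graph and let $H$ be a connected component of the complement $\overline{G}$ such that $H$ is isomorphic to the star $K_{1,n}$ for some $n\geq 2$. Then no vertex of $H$ is a basis forced vertex of $G$.
   Context: All graphs are finite and simple. $\overline{G}$ denotes the complement graph. For vertices $u,v$ of a connected graph $G$, $d(u,v)$ is the length of a shortest $u$–$v$ path. A set $R\subseteq V(G)$ is a resolving set if for all distinct $x,y\in V(G)$ there is $r\in R$ with $d(r,x)\neq d(r,y)$. The metric dimension $\dim(G)$ is the minimum cardinality of a resolving set, and a resolving set of cardinality $\dim(G)$ is a metric basis. A vertex is a basis forced vertex if it belongs to every metric basis of $G$. *)

theory Defs
  imports Main
begin

definition simple_graph :: "'a set \<Rightarrow> ('a \<Rightarrow> 'a \<Rightarrow> bool) \<Rightarrow> bool" where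
  "simple_graph V E \<longleftrightarrow> finite V \<and> (\<forall>u v. E u v \<longrightarrow> u \<in> V \<and> v \<in> V)
     \<and> (\<forall>u v. E u v \<longrightarrow> E v u) \<and> (\<forall>v. \<not> E v v)"

fun is_walk :: "'a set \<Rightarrow> ('a \<Rightarrow> 'a \<Rightarrow> bool) \<Rightarrow> 'a list \<Rightarrow> bool" where
  "is_walk V E [] = False"
| "is_walk V E [v] = (v \<in> V)"
| "is_walk V E (u # v # xs) = (u \<in> V \<and> E u v \<and> is_walk V E (v # xs))"

definition reachable :: "'a set \<Rightarrow> ('a \<Rightarrow> 'a \<Rightarrow> bool) \<Rightarrow> 'a \<Rightarrow> 'a \<Rightarrow> bool" where
  "reachable V E u v \<longleftrightarrow> (\<exists>xs. is_walk V E xs \<and> hd xs = u \<and> last xs = v)"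

definition connected_graph :: "'a set \<Rightarrow> ('a \<Rightarrow> 'a \<Rightarrow> bool) \<Rightarrow> bool" where
  "connected_graph V E \<longleftrightarrow> V \<noteq> {} \<and> (\<forall>u\<in>V. \<forall>v\<in>V. reachable V E u v)"

definition dist :: "'a set \<Rightarrow> ('a \<Rightarrow> 'a \<Rightarrow> bool) \<Rightarrow> 'a \<Rightarrow> 'a \<Rightarrow> nat" where
  "dist V E u v = (LEAST k. \<exists>xs. is_walk V E xs \<and> hd xs = u \<and> last xs = v \<and> length xs = Suc k)"

definition resolving_set :: "'a set \<Rightarrow> ('a \<Rightarrow> 'a \<Rightarrow> bool) \<Rightarrow> 'a set \<Rightarrow> bool" where
  "resolving_set V E R \<longleftrightarrow> R \<subseteq> V \<and>
     (\<forall>x\<in>V. \<forall>y\<in>V. x \<noteq> y \<longrightarrow> (\<exists>r\<in>R. dist V E r x \<noteq> dist V E r y))"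

definition metric_dim :: "'a set \<Rightarrow> ('a \<Rightarrow> 'a \<Rightarrow> bool) \<Rightarrow> nat" where
  "metric_dim V E = (LEAST k. \<exists>R. resolving_set V E R \<and> card R = k)"

definition metric_basis :: "'a set \<Rightarrow> ('a \<Rightarrow> 'a \<Rightarrow> bool) \<Rightarrow> 'a set \<Rightarrow> bool" where
  "metric_basis V E R \<longleftrightarrow> resolving_set V E R \<and> card R = metric_dim V E"

definition basis_forced :: "'a set \<Rightarrow> ('a \<Rightarrow> 'a \<Rightarrow> bool) \<Rightarrow> 'a \<Rightarrow> bool" where
  "basis_forced V E v \<longleftrightarrow> v \<in> V \<and> (\<forall>R. metric_basis V E R \<longrightarrow> v \<in> R)"

definition compl_edges :: "'a set \<Rightarrow> ('a \<Rightarrow> 'a \<Rightarrow> bool) \<Rightarrow> 'a \<Rightarrow> 'a \<Rightarrow> bool" where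
  "compl_edges V E u v \<longleftrightarrow> u \<in> V \<and> v \<in> V \<and> u \<noteq> v \<and> \<not> E u v"

definition components :: "'a set \<Rightarrow> ('a \<Rightarrow> 'a \<Rightarrow> bool) \<Rightarrow> 'a set set" where
  "components V E = {{v. reachable V E u v} | u. u \<in> V}"

definition induced_edges :: "'a set \<Rightarrow> ('a \<Rightarrow> 'a \<Rightarrow> bool) \<Rightarrow> 'a \<Rightarrow> 'a \<Rightarrow> bool" where
  "induced_edges C E u v \<longleftrightarrow> u \<in> C \<and> v \<in> C \<and> E u v"

definition graph_iso :: "'a set \<Rightarrow> ('a \<Rightarrow> 'a \<Rightarrow> bool) \<Rightarrow> 'b set \<Rightarrow> ('b \<Rightarrow> 'b \<Rightarrow> bool) \<Rightarrow> bool" where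
  "graph_iso V1 E1 V2 E2 \<longleftrightarrow> (\<exists>f. bij_betw f V1 V2 \<and>
     (\<forall>x\<in>V1. \<forall>y\<in>V1. E1 x y \<longleftrightarrow> E2 (f x) (f y)))"

definition star_vertices :: "nat \<Rightarrow> nat set" where
  "star_vertices n = {0..n}"

definition star_edges :: "nat \<Rightarrow> nat \<Rightarrow> nat \<Rightarrow> bool" where
  "star_edges n a b \<longleftrightarrow> a \<le> n \<and> b \<le> n \<and> ((a = 0 \<and> b \<noteq> 0) \<or> (b = 0 \<and> a \<noteq> 0))"

end

theory Submission
  imports Defs "HOL-Combinatorics.Transposition"
begin

text \<open>Since \<open>C\<close> is a component of the complement, every vertex of \<open>C\<close> is adjacent in \<open>G\<close> to
  every vertex outside \<open>C\<close>; hence \<open>G\<close> has diameter at most two, and a set resolves \<open>G\<close> iff for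
  any two vertices it contains one of them or a vertex adjacent to exactly one of them. On \<open>C\<close>
  the graph \<open>G\<close> is the complement of the star: the leaves are pairwise adjacent twins and the
  centre \<open>c\<close> is adjacent exactly to the vertices outside \<open>C\<close>. A resolving set contains all leaves
  but at most one, and transposing two twins is an automorphism. A basis containing all leaves
  can trade a leaf for \<open>c\<close>, so some basis misses a leaf \<open>b\<close>; trading any other vertex of \<open>C\<close>
  in that basis for \<open>b\<close> gives again a basis.\<close>

section \<open>Walks, distances and components\<close>

lemma is_walk_snoc: "is_walk V E xs \<Longrightarrow> E (last xs) y \<Longrightarrow> y \<in> V \<Longrightarrow> is_walk V E (xs @ [y])"
  by (induction V E xs rule: is_walk.induct) auto

lemma is_walk_last_in: "is_walk V E xs \<Longrightarrow> last xs \<in> V"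
  by (induction V E xs rule: is_walk.induct) auto

lemma is_walk_hd_edge: "is_walk V E xs \<Longrightarrow> hd xs \<noteq> last xs \<Longrightarrow> \<exists>z. E (hd xs) z"
  by (cases "(V, E, xs)" rule: is_walk.cases) auto

lemma dist_self: "x \<in> V \<Longrightarrow> dist V E x x = 0"
  unfolding dist_def by (rule Least_equality) (rule exI[of _ "[x]"], auto)

lemma dist_eq_1:
  assumes "x \<in> V" "y \<in> V" "x \<noteq> y" "E x y"
  shows "dist V E x y = 1"
  unfolding dist_def
proof (rule Least_equality)
  show "\<exists>xs. is_walk V E xs \<and> hd xs = x \<and> last xs = y \<and> length xs = Suc 1"
    using assms by (intro exI[of _ "[x, y]"]) auto
next
  fix k assume "\<exists>xs. is_walk V E xs \<and> hd xs = x \<and> last xs = y \<and> length xs = Suc k"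
  then show "1 \<le> k"
    using \<open>x \<noteq> y\<close> by (cases k) (auto simp: length_Suc_conv)
qed

lemma dist_eq_2:
  assumes "x \<in> V" "y \<in> V" "w \<in> V" "x \<noteq> y" "\<not> E x y" "E x w" "E w y"
  shows "dist V E x y = 2"
  unfolding dist_def
proof (rule Least_equality)
  show "\<exists>xs. is_walk V E xs \<and> hd xs = x \<and> last xs = y \<and> length xs = Suc 2"
    using assms by (intro exI[of _ "[x, w, y]"]) auto
next
  fix k assume "\<exists>xs. is_walk V E xs \<and> hd xs = x \<and> last xs = y \<and> length xs = Suc k"
  then obtain xs where "is_walk V E xs" "hd xs = x" "last xs = y" "length xs = Suc k"
    by blast
  with \<open>x \<noteq> y\<close> \<open>\<not> E x y\<close> show "2 \<le> k"
    by (cases k; cases "k - 1") (auto simp: length_Suc_conv)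
qed

lemma connected_graph_has_edge:
  assumes "connected_graph V E" "x \<in> V" "y \<in> V" "x \<noteq> y"
  shows "\<exists>z. E x z"
proof -
  obtain xs where "is_walk V E xs" "hd xs = x" "last xs = y"
    using assms unfolding connected_graph_def reachable_def by blast
  with \<open>x \<noteq> y\<close> show ?thesis
    using is_walk_hd_edge by metis
qed

lemma components_subset: "C \<in> components V E \<Longrightarrow> C \<subseteq> V"
  unfolding components_def reachable_def by (auto dest: is_walk_last_in)

lemma components_closed:
  assumes "C \<in> components V E" "x \<in> C" "E x y" "y \<in> V"
  shows "y \<in> C"
proof -
  obtain u where C: "C = {v. reachable V E u v}"
    using assms(1) unfolding components_def by blast
  then obtain xs where walk: "is_walk V E xs" and "hd xs = u" "last xs = x"
    using assms(2) unfolding reachable_def by blast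
  moreover have "is_walk V E (xs @ [y])"
    using is_walk_snoc[OF walk] \<open>last xs = x\<close> assms(3,4) by simp
  moreover have "xs \<noteq> []"
    using walk by auto
  ultimately show ?thesis
    unfolding C reachable_def mem_Collect_eq by (intro exI[of _ "xs @ [y]"]) simp
qed

lemma components_compl_join:
  assumes "C \<in> components V (compl_edges V E)" "x \<in> C" "y \<in> V - C"
  shows "E x y"
proof (rule ccontr)
  assume "\<not> E x y"
  moreover have "x \<in> V"
    using assms(1,2) components_subset by blast
  moreover have "x \<noteq> y"
    using assms(2,3) by blast
  ultimately have "compl_edges V E x y"
    using assms(3) unfolding compl_edges_def by blast
  then have "y \<in> C"
    using components_closed[OF assms(1,2)] assms(3) by blast
  with assms(3) show False
    by blast
qed

lemma graph_iso_star:
  assumes "graph_iso C F (star_vertices n) (star_edges n)"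
  shows "\<exists>c\<in>C. card C = Suc n \<and> (\<forall>x\<in>C. \<forall>y\<in>C. F x y \<longleftrightarrow> x \<noteq> y \<and> (x = c \<or> y = c))"
proof -
  obtain f where f: "bij_betw f C {0..n}" and iso: "\<forall>x\<in>C. \<forall>y\<in>C. F x y \<longleftrightarrow> star_edges n (f x) (f y)"
    using assms unfolding graph_iso_def star_vertices_def by blast
  define c where "c = inv_into C f 0"
  have "c \<in> C" "f c = 0"
    unfolding c_def using f by (auto simp: bij_betw_def inv_into_into f_inv_into_f)
  have inj: "inj_on f C" and range: "f ` C = {0..n}"
    using f by (auto simp: bij_betw_def)
  have adj: "F x y \<longleftrightarrow> x \<noteq> y \<and> (x = c \<or> y = c)" if "x \<in> C" "y \<in> C" for x y
  proof -
    have "f x \<le> n" "f y \<le> n"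
      using range that by auto
    moreover have "f x = f y \<longleftrightarrow> x = y" "f x = 0 \<longleftrightarrow> x = c" "f y = 0 \<longleftrightarrow> y = c"
      using inj_on_eq_iff[OF inj] that \<open>c \<in> C\<close> \<open>f c = 0\<close> by metis+
    ultimately show ?thesis
      using iso that unfolding star_edges_def by auto
  qed
  have "card C = Suc n"
    using bij_betw_same_card[OF f] by simp
  with \<open>c \<in> C\<close> adj show ?thesis
    by blast
qed

section \<open>Resolving sets in graphs of diameter two\<close>

definition separates :: "('a \<Rightarrow> 'a \<Rightarrow> bool) \<Rightarrow> 'a \<Rightarrow> 'a \<Rightarrow> 'a \<Rightarrow> bool" where
  "separates E r x y \<longleftrightarrow> r = x \<or> r = y \<or> E r x \<noteq> E r y"

definition adjacency_resolving :: "'a set \<Rightarrow> ('a \<Rightarrow> 'a \<Rightarrow> bool) \<Rightarrow> 'a set \<Rightarrow> bool" where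
  "adjacency_resolving V E R \<longleftrightarrow>
     R \<subseteq> V \<and> (\<forall>x\<in>V. \<forall>y\<in>V. x \<noteq> y \<longrightarrow> (\<exists>r\<in>R. separates E r x y))"

lemma separates_commute: "separates E r x y \<longleftrightarrow> separates E r y x"
  unfolding separates_def by auto

lemma separated_by_member: "x \<in> R \<or> y \<in> R \<Longrightarrow> \<exists>r\<in>R. separates E r x y"
  unfolding separates_def by blast

lemma adjacency_resolving_whole: "adjacency_resolving V E V"
  unfolding adjacency_resolving_def by (auto intro: separated_by_member)

lemma dist_diameter_two:
  assumes "simple_graph V E"
    and common: "\<forall>x\<in>V. \<forall>y\<in>V. x \<noteq> y \<longrightarrow> \<not> E x y \<longrightarrow> (\<exists>z. E x z \<and> E z y)"
    and "x \<in> V" "y \<in> V"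
  shows "dist V E x y = (if x = y then 0 else if E x y then 1 else 2)"
proof -
  have "dist V E x y = 2" if ne: "x \<noteq> y" and nonadj: "\<not> E x y"
  proof -
    obtain z where xz: "E x z" and zy: "E z y"
      using common assms(3,4) ne nonadj by blast
    moreover have "z \<in> V"
      using xz assms(1) unfolding simple_graph_def by blast
    ultimately show ?thesis
      using assms(3,4) ne nonadj xz zy by (intro dist_eq_2[where w = z])
  qed
  then show ?thesis
    using dist_self dist_eq_1 assms(3,4) by auto
qed

lemma resolving_set_iff_adjacency_resolving:
  assumes "simple_graph V E"
    and "\<forall>x\<in>V. \<forall>y\<in>V. x \<noteq> y \<longrightarrow> \<not> E x y \<longrightarrow> (\<exists>z. E x z \<and> E z y)"
  shows "resolving_set V E R \<longleftrightarrow> adjacency_resolving V E R"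
proof -
  have "dist V E r x \<noteq> dist V E r y \<longleftrightarrow> separates E r x y"
    if "r \<in> V" "x \<in> V" "y \<in> V" "x \<noteq> y" for r x y
    using dist_diameter_two[OF assms that(1,2)] dist_diameter_two[OF assms that(1,3)] that(4)
    unfolding separates_def by auto
  then show ?thesis
    unfolding resolving_set_def adjacency_resolving_def by blast
qed

lemma join_common_neighbour:
  assumes "simple_graph V E" and join: "\<forall>x\<in>C. \<forall>y\<in>V - C. E x y"
    and "C \<noteq> {}" "V - C \<noteq> {}"
  shows "\<forall>x\<in>V. \<forall>y\<in>V. x \<noteq> y \<longrightarrow> \<not> E x y \<longrightarrow> (\<exists>z. E x z \<and> E z y)"
proof (intro ballI impI)
  fix x y assume "x \<in> V" "y \<in> V" "\<not> E x y"
  have sym: "E u v \<Longrightarrow> E v u" for u v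
    using assms(1) unfolding simple_graph_def by blast
  have same_side: "x \<in> C \<longleftrightarrow> y \<in> C"
    using join sym \<open>x \<in> V\<close> \<open>y \<in> V\<close> \<open>\<not> E x y\<close> by blast
  show "\<exists>z. E x z \<and> E z y"
  proof (cases "x \<in> C")
    case True
    obtain w where "w \<in> V - C"
      using assms(4) by blast
    then show ?thesis
      using True same_side join sym \<open>y \<in> V\<close> by blast
  next
    case False
    obtain w where "w \<in> C"
      using assms(3) by blast
    then show ?thesis
      using False same_side join sym \<open>x \<in> V\<close> \<open>y \<in> V\<close> by blast
  qed
qed

section \<open>Twins and automorphisms\<close>

definition twins :: "'a set \<Rightarrow> ('a \<Rightarrow> 'a \<Rightarrow> bool) \<Rightarrow> 'a \<Rightarrow> 'a \<Rightarrow> bool" where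
  "twins V E a b \<longleftrightarrow> (\<forall>y\<in>V - {a, b}. E a y \<longleftrightarrow> E b y)"

lemma adjacency_resolving_twins:
  assumes "simple_graph V E" "adjacency_resolving V E R" "twins V E a b"
    and "a \<in> V" "b \<in> V" "a \<noteq> b"
  shows "a \<in> R \<or> b \<in> R"
proof (rule ccontr)
  assume "\<not> (a \<in> R \<or> b \<in> R)"
  obtain r where "r \<in> R" and sep: "separates E r a b"
    using assms(2,4-6) unfolding adjacency_resolving_def by blast
  then have "r \<in> V - {a, b}"
    using assms(2) \<open>\<not> (a \<in> R \<or> b \<in> R)\<close> unfolding adjacency_resolving_def by blast
  then have "E a r \<longleftrightarrow> E b r"
    using assms(3) unfolding twins_def by blast
  then have "E r a \<longleftrightarrow> E r b"
    using assms(1) unfolding simple_graph_def by blast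
  with sep \<open>r \<in> V - {a, b}\<close> show False
    unfolding separates_def by blast
qed

lemma adjacency_resolving_automorphism_image:
  assumes bij: "bij_betw \<sigma> V V" and hom: "\<forall>x\<in>V. \<forall>y\<in>V. E (\<sigma> x) (\<sigma> y) \<longleftrightarrow> E x y"
    and res: "adjacency_resolving V E R"
  shows "adjacency_resolving V E (\<sigma> ` R)"
  unfolding adjacency_resolving_def
proof (intro conjI ballI impI)
  show "\<sigma> ` R \<subseteq> V"
    using bij res unfolding adjacency_resolving_def bij_betw_def by blast
next
  fix x y assume "x \<in> V" "y \<in> V" "x \<noteq> y"
  have onto: "\<sigma> ` V = V" and inj: "inj_on \<sigma> V"
    using bij by (auto simp: bij_betw_def)
  obtain x' where "x' \<in> V" and x: "x = \<sigma> x'"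
    using \<open>x \<in> V\<close> onto by blast
  obtain y' where "y' \<in> V" and y: "y = \<sigma> y'"
    using \<open>y \<in> V\<close> onto by blast
  have "x' \<noteq> y'"
    using \<open>x \<noteq> y\<close> unfolding x y by blast
  then obtain r where "r \<in> R" and sep: "separates E r x' y'"
    using res \<open>x' \<in> V\<close> \<open>y' \<in> V\<close> unfolding adjacency_resolving_def by blast
  have "r \<in> V"
    using \<open>r \<in> R\<close> res unfolding adjacency_resolving_def by blast
  have "\<sigma> r = \<sigma> x' \<longleftrightarrow> r = x'" "\<sigma> r = \<sigma> y' \<longleftrightarrow> r = y'"
    using inj_on_eq_iff[OF inj] \<open>r \<in> V\<close> \<open>x' \<in> V\<close> \<open>y' \<in> V\<close> by blast+
  moreover have "E (\<sigma> r) (\<sigma> x') \<longleftrightarrow> E r x'" "E (\<sigma> r) (\<sigma> y') \<longleftrightarrow> E r y'"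
    using hom \<open>r \<in> V\<close> \<open>x' \<in> V\<close> \<open>y' \<in> V\<close> by blast+
  ultimately have "separates E (\<sigma> r) x y"
    using sep unfolding x y separates_def by simp
  with \<open>r \<in> R\<close> show "\<exists>r\<in>\<sigma> ` R. separates E r x y"
    by blast
qed

lemma transpose_twins_automorphism:
  assumes "simple_graph V E" "twins V E a b" "a \<in> V" "b \<in> V"
  shows "bij_betw (transpose a b) V V"
    and "\<forall>x\<in>V. \<forall>y\<in>V. E (transpose a b x) (transpose a b y) \<longleftrightarrow> E x y"
proof -
  show "bij_betw (transpose a b) V V"
    using assms(3,4) by simp
  have sym: "E u v \<Longrightarrow> E v u" and irrefl: "\<not> E u u" for u v
    using assms(1) unfolding simple_graph_def by blast+
  have twin: "E a y \<longleftrightarrow> E b y" "E y a \<longleftrightarrow> E y b" if "y \<in> V" "y \<noteq> a" "y \<noteq> b" for y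
    using assms(2) that sym unfolding twins_def by blast+
  have "E b a \<longleftrightarrow> E a b"
    using sym by blast
  then show "\<forall>x\<in>V. \<forall>y\<in>V. E (transpose a b x) (transpose a b y) \<longleftrightarrow> E x y"
    using twin irrefl unfolding transpose_def by (smt (verit))
qed

lemma transpose_image_exchange: "a \<in> R \<Longrightarrow> b \<notin> R \<Longrightarrow> transpose a b ` R = insert b (R - {a})"
  by (auto simp: transpose_def)

section \<open>Metric bases\<close>

lemma metric_dim_le_card: "resolving_set V E R \<Longrightarrow> metric_dim V E \<le> card R"
  unfolding metric_dim_def by (rule Least_le) blast

lemma metric_basis_exists: "resolving_set V E R \<Longrightarrow> \<exists>B. metric_basis V E B"
  unfolding metric_basis_def metric_dim_def by (rule LeastI_ex) blast

lemma metric_basis_minimal: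
  assumes "finite V" "metric_basis V E R" "a \<in> R"
  shows "\<not> resolving_set V E (R - {a})"
proof
  assume "resolving_set V E (R - {a})"
  moreover have "finite R"
    using assms(1,2) finite_subset unfolding metric_basis_def resolving_set_def by blast
  ultimately show False
    using metric_dim_le_card assms(2,3) card_Diff1_less unfolding metric_basis_def by fastforce
qed

lemma metric_basis_exchange:
  assumes "finite V" "metric_basis V E R" "a \<in> R" "b \<notin> R"
    and "resolving_set V E (insert b (R - {a}))"
  shows "metric_basis V E (insert b (R - {a}))"
proof -
  have "finite R"
    using assms(1,2) finite_subset unfolding metric_basis_def resolving_set_def by blast
  moreover have "card R > 0"
    using \<open>finite R\<close> assms(3) card_gt_0_iff by blast
  ultimately have "card (insert b (R - {a})) = card R"
    using assms(3,4) by (simp add: card_Diff_singleton)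
  then show ?thesis
    using assms(2,5) unfolding metric_basis_def by simp
qed

section \<open>A star component of the complement\<close>

locale star_complement_join =
  fixes V :: "'a set" and E :: "'a \<Rightarrow> 'a \<Rightarrow> bool" and C :: "'a set" and c :: 'a
  assumes simple: "simple_graph V E"
    and connected: "connected_graph V E"
    and component_subset: "C \<subseteq> V"
    and centre_in: "c \<in> C"
    and adj_inside: "\<And>x y. x \<in> C \<Longrightarrow> y \<in> C \<Longrightarrow> E x y \<longleftrightarrow> x \<noteq> y \<and> x \<noteq> c \<and> y \<noteq> c"
    and adj_across: "\<And>x y. x \<in> C \<Longrightarrow> y \<in> V - C \<Longrightarrow> E x y"
    and two_leaves: "2 \<le> card (C - {c})"
begin

abbreviation leaves :: "'a set" where
  "leaves \<equiv> C - {c}"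

lemma finite_vertices: "finite V"
  using simple unfolding simple_graph_def by blast

lemma edge_in: "E x y \<Longrightarrow> y \<in> V"
  using simple unfolding simple_graph_def by blast

lemma centre_adj: "y \<in> V \<Longrightarrow> E c y \<longleftrightarrow> y \<notin> C"
  using adj_inside[OF centre_in] adj_across[OF centre_in] by blast

lemma leaf_adj: "l \<in> leaves \<Longrightarrow> y \<in> V \<Longrightarrow> E l y \<longleftrightarrow> y \<noteq> l \<and> y \<noteq> c"
  using adj_inside adj_across centre_in by blast

lemma other_leaf: "\<exists>a\<in>leaves. a \<noteq> b"
proof (rule ccontr)
  assume "\<not> (\<exists>a\<in>leaves. a \<noteq> b)"
  then have "leaves \<subseteq> {b}"
    by blast
  then have "card leaves \<le> 1"
    using card_mono[of "{b}"] by simp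
  with two_leaves show False
    by simp
qed

lemma outside_nonempty: "V - C \<noteq> {}"
proof -
  obtain l where "l \<in> leaves"
    using other_leaf by blast
  then obtain z where "E c z"
    using connected_graph_has_edge[OF connected] centre_in component_subset by blast
  then show ?thesis
    using edge_in centre_adj by blast
qed

lemma nonadjacent_common_neighbour:
  "\<forall>x\<in>V. \<forall>y\<in>V. x \<noteq> y \<longrightarrow> \<not> E x y \<longrightarrow> (\<exists>z. E x z \<and> E z y)"
proof (rule join_common_neighbour[OF simple])
  show "\<forall>x\<in>C. \<forall>y\<in>V - C. E x y"
    using adj_across by blast
  show "C \<noteq> {}"
    using centre_in by blast
qed (rule outside_nonempty)

lemma resolving_set_iff: "resolving_set V E R \<longleftrightarrow> adjacency_resolving V E R"
  by (rule resolving_set_iff_adjacency_resolving[OF simple nonadjacent_common_neighbour])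

lemma leaves_twins: "a \<in> leaves \<Longrightarrow> b \<in> leaves \<Longrightarrow> twins V E a b"
  unfolding twins_def using leaf_adj by blast

lemma leaf_separates_centre: "a \<in> leaves \<Longrightarrow> y \<in> V \<Longrightarrow> y \<noteq> c \<Longrightarrow> separates E a c y"
  unfolding separates_def using leaf_adj[of a c] leaf_adj[of a y] centre_in component_subset by auto

lemma centre_separates_leaf_outside: "a \<in> leaves \<Longrightarrow> y \<in> V - C \<Longrightarrow> separates E c a y"
  unfolding separates_def using centre_adj component_subset by auto

lemma adjacency_resolving_exchange_leaf_centre:
  assumes res: "adjacency_resolving V E R" and "leaves \<subseteq> R" "a \<in> leaves"
  shows "adjacency_resolving V E (insert c (R - {a}))" (is "adjacency_resolving V E ?R")
proof -
  have separated_from_a: "\<exists>r\<in>?R. separates E r a y" if "y \<in> V" "y \<noteq> a" for y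
  proof (cases "y \<in> C")
    case True
    then have "y \<in> ?R"
      using \<open>leaves \<subseteq> R\<close> that(2) by blast
    then show ?thesis
      by (intro separated_by_member) blast
  next
    case False
    then show ?thesis
      using centre_separates_leaf_outside[OF \<open>a \<in> leaves\<close>] that(1) by blast
  qed
  show ?thesis
    unfolding adjacency_resolving_def
  proof (intro conjI ballI impI)
    show "?R \<subseteq> V"
      using res centre_in component_subset unfolding adjacency_resolving_def by blast
  next
    fix x y assume "x \<in> V" "y \<in> V" "x \<noteq> y"
    then obtain r where "r \<in> R" and sep: "separates E r x y"
      using res unfolding adjacency_resolving_def by blast
    show "\<exists>r\<in>?R. separates E r x y"
    proof (cases "r = a")
      case False
      with \<open>r \<in> R\<close> sep show ?thesis
        by blast
    next
      case True
      then have "x = a \<or> y = a \<or> x = c \<or> y = c"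
        using sep leaf_adj[OF \<open>a \<in> leaves\<close>] \<open>x \<in> V\<close> \<open>y \<in> V\<close> unfolding separates_def by auto
      then show ?thesis
      proof (elim disjE)
        assume "x = a"
        then show ?thesis
          using separated_from_a[OF \<open>y \<in> V\<close>] \<open>x \<noteq> y\<close> by simp
      next
        assume "y = a"
        then show ?thesis
          using separated_from_a[OF \<open>x \<in> V\<close>] \<open>x \<noteq> y\<close> by (simp add: separates_commute[of E _ x])
      qed (intro separated_by_member; blast)+
    qed
  qed
qed

lemma adjacency_resolving_exchange_centre_leaf:
  assumes res: "adjacency_resolving V E R" and "b \<in> leaves" "leaves - {b} \<subseteq> R"
  shows "adjacency_resolving V E (insert b (R - {c}))" (is "adjacency_resolving V E ?R")
proof -
  have leaves_in: "leaves \<subseteq> ?R"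
    using \<open>leaves - {b} \<subseteq> R\<close> by blast
  obtain a where "a \<in> leaves" "a \<noteq> b"
    using other_leaf by blast
  show ?thesis
    unfolding adjacency_resolving_def
  proof (intro conjI ballI impI)
    show "?R \<subseteq> V"
      using res \<open>b \<in> leaves\<close> component_subset unfolding adjacency_resolving_def by blast
  next
    fix x y assume "x \<in> V" "y \<in> V" "x \<noteq> y"
    then obtain r where "r \<in> R" and sep: "separates E r x y"
      using res unfolding adjacency_resolving_def by blast
    show "\<exists>r\<in>?R. separates E r x y"
    proof (cases "r = c")
      case False
      with \<open>r \<in> R\<close> sep show ?thesis
        by blast
    next
      case True
      show ?thesis
      proof (cases "x = c \<or> y = c")
        case True
        then have "separates E a x y"
        proof
          assume "x = c"
          then show ?thesis
            using leaf_separates_centre[OF \<open>a \<in> leaves\<close> \<open>y \<in> V\<close>] \<open>x \<noteq> y\<close> by simp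
        next
          assume "y = c"
          then show ?thesis
            using leaf_separates_centre[OF \<open>a \<in> leaves\<close> \<open>x \<in> V\<close>] \<open>x \<noteq> y\<close>
            by (simp add: separates_commute[of E a x])
        qed
        then show ?thesis
          using leaves_in \<open>a \<in> leaves\<close> by blast
      next
        case False
        then have "x \<in> leaves \<or> y \<in> leaves"
          using sep \<open>r = c\<close> centre_adj \<open>x \<in> V\<close> \<open>y \<in> V\<close> unfolding separates_def by auto
        then show ?thesis
          using leaves_in by (intro separated_by_member) blast
      qed
    qed
  qed
qed

lemma metric_basis_missing_leaf: "\<exists>R b. metric_basis V E R \<and> b \<in> leaves \<and> b \<notin> R"
proof -
  have "resolving_set V E V"
    using adjacency_resolving_whole resolving_set_iff by blast
  then obtain R where R: "metric_basis V E R"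
    using metric_basis_exists by blast
  show ?thesis
  proof (cases "leaves \<subseteq> R")
    case False
    with R show ?thesis
      by blast
  next
    case True
    obtain a where a: "a \<in> leaves"
      using other_leaf by blast
    let ?R' = "insert c (R - {a})"
    have "adjacency_resolving V E R"
      using R resolving_set_iff unfolding metric_basis_def by blast
    then have res': "resolving_set V E ?R'"
      using adjacency_resolving_exchange_leaf_centre[OF _ True a] by (simp add: resolving_set_iff)
    have "c \<notin> R"
    proof
      assume "c \<in> R"
      then have "?R' = R - {a}"
        using a by blast
      with res' show False
        using metric_basis_minimal[OF finite_vertices R] a True by auto
    qed
    then have "metric_basis V E ?R'"
      using metric_basis_exchange[OF finite_vertices R] a True res' by blast
    moreover have "a \<notin> ?R'"
      using a by blast
    ultimately show ?thesis
      using a by blast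
  qed
qed

lemma leaves_in_adjacency_resolving:
  assumes res: "adjacency_resolving V E R" and b: "b \<in> leaves" "b \<notin> R"
  shows "leaves - {b} \<subseteq> R"
proof
  fix a assume "a \<in> leaves - {b}"
  then have "a \<in> R \<or> b \<in> R"
    using adjacency_resolving_twins[OF simple res leaves_twins] b(1) component_subset by blast
  with b(2) show "a \<in> R"
    by blast
qed

lemma adjacency_resolving_exchange_leaves:
  assumes res: "adjacency_resolving V E R" and "a \<in> leaves" "b \<in> leaves" "a \<in> R" "b \<notin> R"
  shows "adjacency_resolving V E (insert b (R - {a}))"
proof -
  have "a \<in> V" "b \<in> V"
    using assms(2,3) component_subset by auto
  note automorphism = transpose_twins_automorphism[OF simple leaves_twins[OF assms(2,3)] this]
  have "adjacency_resolving V E (transpose a b ` R)"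
    by (rule adjacency_resolving_automorphism_image[OF automorphism res])
  then show ?thesis
    using transpose_image_exchange[OF assms(4,5)] by simp
qed

lemma not_basis_forced: "v \<in> C \<Longrightarrow> \<not> basis_forced V E v"
proof -
  assume "v \<in> C"
  obtain R b where R: "metric_basis V E R" and b: "b \<in> leaves" "b \<notin> R"
    using metric_basis_missing_leaf by blast
  have res: "adjacency_resolving V E R"
    using R resolving_set_iff unfolding metric_basis_def by blast
  have "\<exists>B. metric_basis V E B \<and> v \<notin> B"
  proof (cases "v \<in> R")
    case False
    with R show ?thesis
      by blast
  next
    case True
    have "adjacency_resolving V E (insert b (R - {v}))"
    proof (cases "v = c")
      case True
      then show ?thesis
        using adjacency_resolving_exchange_centre_leaf[OF res b(1) leaves_in_adjacency_resolving[OF res b]]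
        by simp
    next
      case False
      with \<open>v \<in> C\<close> show ?thesis
        using adjacency_resolving_exchange_leaves[OF res _ b(1) \<open>v \<in> R\<close> b(2)] by blast
    qed
    then have "metric_basis V E (insert b (R - {v}))"
      using metric_basis_exchange[OF finite_vertices R True b(2)] by (simp add: resolving_set_iff)
    moreover have "v \<notin> insert b (R - {v})"
      using True b(2) by blast
    ultimately show ?thesis
      by blast
  qed
  then show "\<not> basis_forced V E v"
    unfolding basis_forced_def by blast
qed

end

theorem lemma6:
  fixes V :: "'a set" and E :: "'a \<Rightarrow> 'a \<Rightarrow> bool" and C :: "'a set" and n :: nat
  assumes "simple_graph V E"
    and "connected_graph V E"
    and "C \<in> components V (compl_edges V E)"
    and "n \<ge> 2"
    and "graph_iso C (induced_edges C (compl_edges V E)) (star_vertices n) (star_edges n)"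
  shows "\<forall>v\<in>C. \<not> basis_forced V E v"
proof -
  have "C \<subseteq> V"
    using components_subset[OF assms(3)] .
  obtain c where "c \<in> C" and "card C = Suc n"
    and star: "\<forall>x\<in>C. \<forall>y\<in>C. induced_edges C (compl_edges V E) x y \<longleftrightarrow> x \<noteq> y \<and> (x = c \<or> y = c)"
    using graph_iso_star[OF assms(5)] by blast
  have "E x y \<longleftrightarrow> x \<noteq> y \<and> x \<noteq> c \<and> y \<noteq> c" if "x \<in> C" "y \<in> C" for x y
  proof -
    have "\<not> E x x"
      using assms(1) unfolding simple_graph_def by blast
    moreover have "induced_edges C (compl_edges V E) x y \<longleftrightarrow> x \<noteq> y \<and> \<not> E x y"
      using that \<open>C \<subseteq> V\<close> unfolding induced_edges_def compl_edges_def by auto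
    ultimately show ?thesis
      using star that by auto
  qed
  moreover have "2 \<le> card (C - {c})"
    using \<open>c \<in> C\<close> \<open>card C = Suc n\<close> assms(4) by simp
  ultimately interpret star_complement_join V E C c
    using assms(1,2) \<open>C \<subseteq> V\<close> \<open>c \<in> C\<close> components_compl_join[OF assms(3)]
    by unfold_locales auto
  show ?thesis
    using not_basis_forced by blast
qed

end
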